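(* Let $\omega\subset\mathbb{R}^2$ be a bounded domain, let $W$ be a Hilbert space of functions $\omega\to\mathbb{R}^3$, continuously embedded in $L^2(\omega)^3$, with scalar product $(\cdot,\cdot)_*$ and norm $\|\cdot\|_*$, let $\mathcal{F}^k\subset W$ ($k\in\mathbb{N}_0$) be closed linear subspaces, let $f\in L^2(\omega)^3$, $\varepsilon>0$, $\tau>0$, $y^0\in W$, and set $I[y]=\frac12\|y\|_*^2-(f,y)$ and $I'[y;w]=(y,w)_*-(f,w)$. Define $y^k=y^{k-1}+\tau d_ty^k$, where $d_ty^k\in\mathcal{F}^{k-1}$ is such that $(d_ty^k,w)_*+I'[y^k;w]+\frac1\varepsilon(y_3^k,w_3)=-\frac1{2\varepsilon}(p_{\mathrm{ccv}}(y_3^{k-1}),w_3)$ for all $w\in\mathcal{F}^{k-1}$. Then this convex-concavely penalized gradient flow is well defined and satisfies, for all $k\ge1$, $I[y^k]+P_\varepsilon[y_3^k]+\tau\|d_ty^k\|_*^2\le I[y^{k-1}]+P_\varepsilon[y_3^{k-1}]$.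
   Context: $(\cdot,\cdot)$ denotes the $L^2(\omega)$ inner product, and $y_3$ the third component of $y$. The penalty functional is $P_\varepsilon[y_3]=\frac1{2\varepsilon}\int_\omega(y_3-1)_+^2dx$ with $(s)_+=\max\{s,0\}$. The function $p_{\mathrm{ccv}}:\mathbb{R}\to\mathbb{R}$ is $p_{\mathrm{ccv}}(s)=-2$ for $s>1$ and $p_{\mathrm{ccv}}(s)=-2s$ for $s\le1$; it is the derivative of the concave function $P_{\mathrm{ccv}}(s)=-2s+1$ ($s>1$), $-s^2$ ($s\le1$), which satisfies $(s-1)_+^2=s^2+P_{\mathrm{ccv}}(s)$. *)

theory Defs
  imports "HOL-Analysis.Analysis"
begin

text \<open>Functions omega -> R^3 are represented as total functions real^2 => real^3;
  only their values on omega enter the L2 quantities.  The third component is y x $ 3.\<close>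

type_synonym vfield = "real^2 \<Rightarrow> real^3"

definition vadd :: "vfield \<Rightarrow> vfield \<Rightarrow> vfield" where
  "vadd u v = (\<lambda>x. u x + v x)"

definition vscale :: "real \<Rightarrow> vfield \<Rightarrow> vfield" where
  "vscale c u = (\<lambda>x. c *\<^sub>R u x)"

definition vdiff :: "vfield \<Rightarrow> vfield \<Rightarrow> vfield" where
  "vdiff u v = (\<lambda>x. u x - v x)"

definition L2ip3 :: "(real^2) set \<Rightarrow> vfield \<Rightarrow> vfield \<Rightarrow> real" where
  "L2ip3 \<omega> u v = (LINT x:\<omega>|lebesgue. u x \<bullet> v x)"

definition L2ip :: "(real^2) set \<Rightarrow> (real^2 \<Rightarrow> real) \<Rightarrow> (real^2 \<Rightarrow> real) \<Rightarrow> real" where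
  "L2ip \<omega> u v = (LINT x:\<omega>|lebesgue. u x * v x)"

definition L2field :: "(real^2) set \<Rightarrow> vfield \<Rightarrow> bool" where
  "L2field \<omega> u \<longleftrightarrow> set_borel_measurable lebesgue \<omega> u \<and>
     set_integrable lebesgue \<omega> (\<lambda>x. (norm (u x))\<^sup>2)"

definition hilbert_on :: "vfield set \<Rightarrow> (vfield \<Rightarrow> vfield \<Rightarrow> real) \<Rightarrow> bool" where
  "hilbert_on W ip \<longleftrightarrow>
     (\<lambda>x. 0) \<in> W \<and>
     (\<forall>u\<in>W. \<forall>v\<in>W. vadd u v \<in> W) \<and>
     (\<forall>c. \<forall>u\<in>W. vscale c u \<in> W) \<and>
     (\<forall>u\<in>W. \<forall>v\<in>W. ip u v = ip v u) \<and>
     (\<forall>u\<in>W. \<forall>v\<in>W. \<forall>w\<in>W. \<forall>a b.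
         ip (vadd (vscale a u) (vscale b v)) w = a * ip u w + b * ip v w) \<and>
     (\<forall>u\<in>W. u \<noteq> (\<lambda>x. 0) \<longrightarrow> ip u u > 0) \<and>
     (\<forall>s. (\<forall>n. s n \<in> W) \<longrightarrow>
         (\<forall>e>0. \<exists>N. \<forall>m\<ge>N. \<forall>n\<ge>N. sqrt (ip (vdiff (s m) (s n)) (vdiff (s m) (s n))) < e) \<longrightarrow>
         (\<exists>w\<in>W. (\<lambda>n. sqrt (ip (vdiff (s n) w) (vdiff (s n) w))) \<longlonglongrightarrow> 0))"

definition cont_embedded_L2 :: "(real^2) set \<Rightarrow> vfield set \<Rightarrow> (vfield \<Rightarrow> vfield \<Rightarrow> real) \<Rightarrow> bool" where
  "cont_embedded_L2 \<omega> W ip \<longleftrightarrow> (\<forall>w\<in>W. L2field \<omega> w) \<and>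
     (\<exists>C. \<forall>w\<in>W. L2ip3 \<omega> w w \<le> C * ip w w)"

definition closed_subspace_of :: "vfield set \<Rightarrow> vfield set \<Rightarrow> (vfield \<Rightarrow> vfield \<Rightarrow> real) \<Rightarrow> bool" where
  "closed_subspace_of F W ip \<longleftrightarrow> F \<subseteq> W \<and>
     (\<lambda>x. 0) \<in> F \<and>
     (\<forall>u\<in>F. \<forall>v\<in>F. vadd u v \<in> F) \<and>
     (\<forall>c. \<forall>u\<in>F. vscale c u \<in> F) \<and>
     (\<forall>s w. (\<forall>n. s n \<in> F) \<longrightarrow> w \<in> W \<longrightarrow>
         (\<lambda>n. sqrt (ip (vdiff (s n) w) (vdiff (s n) w))) \<longlonglongrightarrow> 0 \<longrightarrow> w \<in> F)"

definition normstar :: "(vfield \<Rightarrow> vfield \<Rightarrow> real) \<Rightarrow> vfield \<Rightarrow> real" where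
  "normstar ip w = sqrt (ip w w)"

definition energyI :: "(real^2) set \<Rightarrow> (vfield \<Rightarrow> vfield \<Rightarrow> real) \<Rightarrow> vfield \<Rightarrow> vfield \<Rightarrow> real" where
  "energyI \<omega> ip f y = 1/2 * (normstar ip y)\<^sup>2 - L2ip3 \<omega> f y"

definition energyI' :: "(real^2) set \<Rightarrow> (vfield \<Rightarrow> vfield \<Rightarrow> real) \<Rightarrow> vfield \<Rightarrow> vfield \<Rightarrow> vfield \<Rightarrow> real" where
  "energyI' \<omega> ip f y w = ip y w - L2ip3 \<omega> f w"

definition penalty :: "(real^2) set \<Rightarrow> real \<Rightarrow> (real^2 \<Rightarrow> real) \<Rightarrow> real" where
  "penalty \<omega> \<epsilon> s = 1 / (2 * \<epsilon>) * (LINT x:\<omega>|lebesgue. (max (s x - 1) 0)\<^sup>2)"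

definition p_ccv :: "real \<Rightarrow> real" where
  "p_ccv s = (if s > 1 then -2 else -2 * s)"

definition comp3 :: "vfield \<Rightarrow> real^2 \<Rightarrow> real" where
  "comp3 y = (\<lambda>x. y x $ 3)"

definition dt :: "real \<Rightarrow> (nat \<Rightarrow> vfield) \<Rightarrow> nat \<Rightarrow> vfield" where
  "dt \<tau> y k = vscale (1 / \<tau>) (vdiff (y k) (y (k - 1)))"

definition ccv_flow ::
  "(real^2) set \<Rightarrow> (vfield \<Rightarrow> vfield \<Rightarrow> real) \<Rightarrow> (nat \<Rightarrow> vfield set) \<Rightarrow> vfield \<Rightarrow>
   real \<Rightarrow> real \<Rightarrow> vfield \<Rightarrow> (nat \<Rightarrow> vfield) \<Rightarrow> bool" where
  "ccv_flow \<omega> ip F f \<epsilon> \<tau> y0 y \<longleftrightarrow> y 0 = y0 \<and>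
     (\<forall>k\<ge>1. dt \<tau> y k \<in> F (k - 1) \<and>
        (\<forall>w\<in>F (k - 1).
           ip (dt \<tau> y k) w + energyI' \<omega> ip f (y k) w + 1 / \<epsilon> * L2ip \<omega> (comp3 (y k)) (comp3 w)
           = - 1 / (2 * \<epsilon>) * L2ip \<omega> (\<lambda>x. p_ccv (comp3 (y (k - 1)) x)) (comp3 w)))"

end

theory Submission
  imports Defs "HOL-Library.Function_Algebras"
begin

text \<open>
  Each time step is a symmetric coercive variational problem on the closed subspace
  F^(k-1): for z = y^(k-1) and d = d_t y^k the equation reads
  (1 + tau) (d, w)_* + tau/eps (d_3, w_3) = l_z(w) with a bounded linear functional l_z,
  so d exists and is unique by the Lax--Milgram lemma, proved by minimizing the Dirichlet
  energy; a minimizing sequence is Cauchy by the parallelogram identity.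

  For the energy law split (s - 1)_+^2 = s^2 + P_ccv(s) into the convex s^2 and the concave
  P_ccv with derivative p_ccv.  The scheme treats s^2 implicitly and P_ccv explicitly, so
  pointwise (b - 1)_+^2 - (a - 1)_+^2 <= (2 b + p_ccv(a)) (b - a).  Integrating this with
  a = y_3^(k-1), b = y_3^k and testing the equation with w = d_t y^k gives the claimed
  inequality up to the additional dissipation -tau^2/2 |d_t y^k|_*^2.
\<close>

instantiation "fun" :: (type, real_vector) real_vector
begin

definition scaleR_fun :: "real \<Rightarrow> ('a \<Rightarrow> 'b) \<Rightarrow> 'a \<Rightarrow> 'b" where
  "scaleR_fun c u = (\<lambda>x. c *\<^sub>R u x)"

instance
  by standard (simp_all add: scaleR_fun_def fun_eq_iff scaleR_add_right scaleR_add_left)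

end

lemma scaleR_fun_apply [simp]: "(c *\<^sub>R u) x = c *\<^sub>R u x"
  by (simp add: scaleR_fun_def)

lemma vadd_eq_plus: "vadd u v = u + v"
  by (simp add: vadd_def fun_eq_iff)

lemma vscale_eq_scaleR: "vscale c u = c *\<^sub>R u"
  by (simp add: vscale_def fun_eq_iff)

lemma vdiff_eq_minus: "vdiff u v = u - v"
  by (simp add: vdiff_def fun_eq_iff)

section \<open>Semi-inner products\<close>

lemma nonneg_quadratic_discrim_nonpos:
  fixes a b c :: real
  assumes "0 \<le> a" and nonneg: "\<And>x. 0 \<le> a * x\<^sup>2 + b * x + c"
  shows "b\<^sup>2 \<le> 4 * a * c"
proof (cases "a = 0")
  case True
  have "b = 0"
  proof (rule ccontr)
    assume "b \<noteq> 0"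
    then have "a * (- (c + 1) / b)\<^sup>2 + b * (- (c + 1) / b) + c = -1"
      using True by simp
    with nonneg show False by (metis neg_0_le_iff_le not_one_le_zero)
  qed
  with True show ?thesis by simp
next
  case False
  with \<open>0 \<le> a\<close> have "0 < a" by simp
  have "0 \<le> a * (- b / (2 * a))\<^sup>2 + b * (- b / (2 * a)) + c" by (rule nonneg)
  also have "\<dots> = (4 * a * c - b\<^sup>2) / (4 * a)"
    using \<open>0 < a\<close> by (simp add: field_simps power2_eq_square)
  finally show ?thesis using \<open>0 < a\<close> by (simp add: zero_le_divide_iff)
qed

locale semi_inner_product_on =
  fixes W :: "'v::real_vector set" and B :: "'v \<Rightarrow> 'v \<Rightarrow> real"
  assumes subspace: "subspace W"
    and sym: "u \<in> W \<Longrightarrow> v \<in> W \<Longrightarrow> B u v = B v u"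
    and add_left: "u \<in> W \<Longrightarrow> v \<in> W \<Longrightarrow> w \<in> W \<Longrightarrow> B (u + v) w = B u w + B v w"
    and scale_left: "u \<in> W \<Longrightarrow> w \<in> W \<Longrightarrow> B (c *\<^sub>R u) w = c * B u w"
    and nonneg: "u \<in> W \<Longrightarrow> 0 \<le> B u u"
begin

lemma add_right: "u \<in> W \<Longrightarrow> v \<in> W \<Longrightarrow> w \<in> W \<Longrightarrow> B w (u + v) = B w u + B w v"
  using sym[of w "u + v"] sym[of w u] sym[of w v] by (simp add: add_left subspace subspace_add)

lemma scale_right: "u \<in> W \<Longrightarrow> w \<in> W \<Longrightarrow> B w (c *\<^sub>R u) = c * B w u"
  using sym[of w "c *\<^sub>R u"] sym[of w u] by (simp add: scale_left subspace subspace_scale)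

lemma add_scale_left:
  "u \<in> W \<Longrightarrow> v \<in> W \<Longrightarrow> w \<in> W \<Longrightarrow> B (u + t *\<^sub>R v) w = B u w + t * B v w"
  by (simp add: add_left scale_left subspace subspace_scale)

lemma add_scale_right:
  "u \<in> W \<Longrightarrow> v \<in> W \<Longrightarrow> w \<in> W \<Longrightarrow> B w (u + t *\<^sub>R v) = B w u + t * B w v"
  by (simp add: add_right scale_right subspace subspace_scale)

lemma diff_left: "u \<in> W \<Longrightarrow> v \<in> W \<Longrightarrow> w \<in> W \<Longrightarrow> B (u - v) w = B u w - B v w"
  using add_scale_left[of u v w "-1"] by simp

lemma expand_square:
  assumes "u \<in> W" "v \<in> W"
  shows "B (u + t *\<^sub>R v) (u + t *\<^sub>R v) = B u u + 2 * t * B u v + t\<^sup>2 * B v v"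
  using assms by (simp add: add_scale_left add_scale_right subspace subspace_add subspace_scale
      sym[of v u] power2_eq_square algebra_simps)

lemma Cauchy_Schwarz:
  assumes "u \<in> W" "v \<in> W"
  shows "\<bar>B u v\<bar> \<le> sqrt (B u u) * sqrt (B v v)"
proof -
  have "(2 * B u v)\<^sup>2 \<le> 4 * B v v * B u u"
  proof (rule nonneg_quadratic_discrim_nonpos)
    show "0 \<le> B v v" using assms(2) by (rule nonneg)
    show "0 \<le> B v v * t\<^sup>2 + 2 * B u v * t + B u u" for t
      using nonneg[of "u + t *\<^sub>R v"] assms
      by (simp add: expand_square subspace subspace_add subspace_scale algebra_simps)
  qed
  then have "\<bar>B u v\<bar> ^ 2 \<le> (sqrt (B u u) * sqrt (B v v))\<^sup>2"
    using assms by (simp add: power_mult_distrib nonneg mult.commute)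
  then show ?thesis by (rule power2_le_imp_le) (simp add: assms nonneg)
qed

definition bounded_functional :: "('v \<Rightarrow> real) \<Rightarrow> bool" where
  "bounded_functional L \<longleftrightarrow>
     (\<forall>u\<in>W. \<forall>v\<in>W. L (u + v) = L u + L v) \<and> (\<forall>c. \<forall>u\<in>W. L (c *\<^sub>R u) = c * L u) \<and>
     (\<exists>M. \<forall>w\<in>W. \<bar>L w\<bar> \<le> M * sqrt (B w w))"

lemma bounded_functional_add:
  assumes "bounded_functional L1" "bounded_functional L2"
  shows "bounded_functional (\<lambda>w. L1 w + L2 w)"
proof -
  obtain M1 M2 where "\<forall>w\<in>W. \<bar>L1 w\<bar> \<le> M1 * sqrt (B w w)" "\<forall>w\<in>W. \<bar>L2 w\<bar> \<le> M2 * sqrt (B w w)"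
    using assms unfolding bounded_functional_def by blast
  then have "\<forall>w\<in>W. \<bar>L1 w + L2 w\<bar> \<le> (M1 + M2) * sqrt (B w w)"
    by (smt (verit, best) distrib_right)
  with assms show ?thesis
    unfolding bounded_functional_def by (simp add: distrib_left) blast
qed

lemma bounded_functional_cmult:
  assumes "bounded_functional L"
  shows "bounded_functional (\<lambda>w. c * L w)"
proof -
  obtain M where "\<forall>w\<in>W. \<bar>L w\<bar> \<le> M * sqrt (B w w)"
    using assms unfolding bounded_functional_def by blast
  then have "\<forall>w\<in>W. \<bar>c * L w\<bar> \<le> (\<bar>c\<bar> * M) * sqrt (B w w)"
    by (simp add: abs_mult mult.assoc mult_left_mono)
  with assms show ?thesis
    unfolding bounded_functional_def by (simp add: distrib_left mult.left_commute) blast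
qed

lemma bounded_functional_pullback:
  assumes S: "semi_inner_product_on S C" and T: "linear T" "T ` W \<subseteq> S"
    and g: "g \<in> S" and bound: "\<And>w. w \<in> W \<Longrightarrow> C (T w) (T w) \<le> K * B w w"
  shows "bounded_functional (\<lambda>w. C g (T w))"
proof -
  interpret S: semi_inner_product_on S C by (fact S)
  have "\<bar>C g (T w)\<bar> \<le> (sqrt (C g g) * sqrt \<bar>K\<bar>) * sqrt (B w w)" if "w \<in> W" for w
  proof -
    have Tw: "T w \<in> S" using T that by blast
    have "C (T w) (T w) \<le> \<bar>K\<bar> * B w w"
      using bound[OF that] nonneg[OF that] by (smt (verit) mult_right_mono abs_ge_self)
    then have "sqrt (C (T w) (T w)) \<le> sqrt \<bar>K\<bar> * sqrt (B w w)"
      by (metis real_sqrt_le_mono real_sqrt_mult)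
    then have "sqrt (C g g) * sqrt (C (T w) (T w)) \<le> sqrt (C g g) * (sqrt \<bar>K\<bar> * sqrt (B w w))"
      using S.nonneg[OF g] by (simp add: mult_left_mono)
    then show ?thesis using S.Cauchy_Schwarz[OF g Tw] by (simp add: mult.assoc)
  qed
  then show ?thesis
    using T g unfolding bounded_functional_def
    by (auto simp: linear_add linear_scale S.add_right S.scale_right image_subset_iff)
qed

end

lemma semi_inner_product_on_pullback:
  assumes "semi_inner_product_on S B" "subspace W" "linear T" "T ` W \<subseteq> S"
  shows "semi_inner_product_on W (\<lambda>u v. B (T u) (T v))"
proof -
  interpret S: semi_inner_product_on S B by fact
  show ?thesis
    using assms by unfold_locales
      (auto simp: linear_add linear_scale S.sym S.add_left S.scale_left S.nonneg image_subset_iff)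
qed

lemma semi_inner_product_on_combination:
  assumes "semi_inner_product_on W B1" "semi_inner_product_on W B2" "0 \<le> a" "0 \<le> b"
  shows "semi_inner_product_on W (\<lambda>u v. a * B1 u v + b * B2 u v)"
proof -
  interpret B1: semi_inner_product_on W B1 by fact
  interpret B2: semi_inner_product_on W B2 by fact
  show ?thesis
  proof
    show "a * B1 u v + b * B2 u v = a * B1 v u + b * B2 v u" if "u \<in> W" "v \<in> W" for u v
      using that by (simp add: B1.sym[of u v] B2.sym[of u v])
  qed (use assms(3,4) in \<open>auto simp: B1.subspace B1.add_left B2.add_left B1.scale_left
      B2.scale_left B1.nonneg B2.nonneg algebra_simps\<close>)
qed

lemma semi_inner_product_on_vimage:
  assumes "semi_inner_product_on S B" "linear T"
  shows "semi_inner_product_on (T -` S) (\<lambda>u v. B (T u) (T v))"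
  using assms semi_inner_product_on.subspace
  by (blast intro: semi_inner_product_on_pullback linear_subspace_vimage)

section \<open>The symmetric Lax--Milgram lemma\<close>

locale hilbert_space_on = semi_inner_product_on W B for W :: "'v::real_vector set" and B +
  assumes definite: "u \<in> W \<Longrightarrow> B u u = 0 \<Longrightarrow> u = 0"
    and complete: "(\<And>n. s n \<in> W) \<Longrightarrow>
      \<forall>e>0. \<exists>N. \<forall>m\<ge>N. \<forall>n\<ge>N. sqrt (B (s m - s n) (s m - s n)) < e \<Longrightarrow>
      \<exists>w\<in>W. (\<lambda>n. sqrt (B (s n - w) (s n - w))) \<longlonglongrightarrow> 0"
begin

definition closed_subspace :: "'v set \<Rightarrow> bool" where
  "closed_subspace G \<longleftrightarrow> subspace G \<and> G \<subseteq> W \<and>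
     (\<forall>s w. (\<forall>n. s n \<in> G) \<longrightarrow> w \<in> W \<longrightarrow> (\<lambda>n. sqrt (B (s n - w) (s n - w))) \<longlonglongrightarrow> 0 \<longrightarrow> w \<in> G)"

lemma closed_subspace_subset: "closed_subspace G \<Longrightarrow> G \<subseteq> W"
  unfolding closed_subspace_def by blast

end

definition dirichlet_energy :: "('v \<Rightarrow> 'v \<Rightarrow> real) \<Rightarrow> ('v \<Rightarrow> real) \<Rightarrow> 'v \<Rightarrow> real" where
  "dirichlet_energy A L u = A u u / 2 - L u"

locale symmetric_lax_milgram =
  hilbert_space_on W ip + A: semi_inner_product_on W A
  for W :: "'v::real_vector set" and ip A +
  fixes G :: "'v set" and L :: "'v \<Rightarrow> real" and \<alpha> K :: real
  assumes G_closed: "closed_subspace G"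
    and coercivity_pos: "0 < \<alpha>" and coercive: "u \<in> W \<Longrightarrow> \<alpha> * ip u u \<le> A u u"
    and bounded: "u \<in> W \<Longrightarrow> A u u \<le> K * ip u u"
    and functional: "bounded_functional L"
begin

abbreviation energy :: "'v \<Rightarrow> real" where
  "energy \<equiv> dirichlet_energy A L"

lemma G_subspace: "subspace G" and G_subset: "G \<subseteq> W"
  using G_closed unfolding closed_subspace_def by auto

lemma L_add_scale: "u \<in> W \<Longrightarrow> v \<in> W \<Longrightarrow> L (u + t *\<^sub>R v) = L u + t * L v"
  using functional subspace_scale[OF subspace] unfolding bounded_functional_def by simp

lemma energy_add_scale:
  "d \<in> W \<Longrightarrow> v \<in> W \<Longrightarrow> energy (d + t *\<^sub>R v) = energy d + t * (A d v - L v) + t\<^sup>2 / 2 * A v v"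
  by (simp add: dirichlet_energy_def A.expand_square L_add_scale algebra_simps)

lemma energy_bounded_below: "\<exists>b. \<forall>u\<in>W. b \<le> energy u"
proof -
  obtain M where M: "\<And>w. w \<in> W \<Longrightarrow> \<bar>L w\<bar> \<le> M * sqrt (ip w w)"
    using functional unfolding bounded_functional_def by blast
  have "- M\<^sup>2 / (2 * \<alpha>) \<le> energy u" if "u \<in> W" for u
  proof -
    define r where "r = sqrt (ip u u)"
    have "ip u u = r\<^sup>2" using nonneg[OF that] by (simp add: r_def)
    then have "\<alpha> * r\<^sup>2 / 2 - M * r \<le> energy u"
      using coercive[OF that] M[OF that] by (simp add: dirichlet_energy_def r_def)
    moreover have "- M\<^sup>2 / (2 * \<alpha>) \<le> \<alpha> * r\<^sup>2 / 2 - M * r"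
    proof -
      have "0 \<le> (\<alpha> * r - M)\<^sup>2 / (2 * \<alpha>)" using coercivity_pos by simp
      also have "\<dots> = \<alpha> * r\<^sup>2 / 2 - M * r + M\<^sup>2 / (2 * \<alpha>)"
        using coercivity_pos by (simp add: field_simps power2_eq_square)
      finally show ?thesis by simp
    qed
    ultimately show ?thesis by linarith
  qed
  then show ?thesis by blast
qed

lemma energy_midpoint:
  assumes "u \<in> W" "v \<in> W"
  shows "A (u - v) (u - v) = 4 * (energy u + energy v) - 8 * energy ((1/2) *\<^sub>R (u + v))"
proof -
  have e: "u - v \<in> W" using assms subspace subspace_diff by blast
  have "(1/2) *\<^sub>R (u + v) = v + (1/2) *\<^sub>R (u - v)"
    by (simp add: algebra_simps) (simp flip: scaleR_add_left)
  then have "energy ((1/2) *\<^sub>R (u + v)) = energy v + (A v (u - v) - L (u - v)) / 2 + A (u - v) (u - v) / 8"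
    using energy_add_scale[OF assms(2) e, of "1/2"] by (simp add: power2_eq_square)
  moreover have "energy u = energy v + (A v (u - v) - L (u - v)) + A (u - v) (u - v) / 2"
    using energy_add_scale[OF assms(2) e, of 1] by simp
  ultimately show ?thesis by (simp add: field_simps)
qed

lemma minimizing_sequence_Cauchy:
  assumes s: "\<And>n. s n \<in> G" and m: "\<And>x. x \<in> G \<Longrightarrow> m \<le> energy x"
    and minimizing: "\<And>n. energy (s n) \<le> m + 1 / real (Suc n)"
  shows "\<forall>e>0. \<exists>N. \<forall>i\<ge>N. \<forall>j\<ge>N. sqrt (ip (s i - s j) (s i - s j)) < e"
proof (intro allI impI)
  fix e :: real assume "0 < e"
  obtain N :: nat where N: "8 / (\<alpha> * e\<^sup>2) < N" using reals_Archimedean2 by blast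
  have "sqrt (ip (s i - s j) (s i - s j)) < e" if "N \<le> i" "N \<le> j" for i j
  proof -
    have sW: "s i \<in> W" "s j \<in> W" using s G_subset by auto
    have mid: "(1/2) *\<^sub>R (s i + s j) \<in> G"
      using s G_subspace subspace_add subspace_scale by blast
    have "1 / real (Suc i) \<le> 1 / Suc N" "1 / real (Suc j) \<le> 1 / Suc N"
      using that by (simp_all add: frac_le)
    then have "\<alpha> * ip (s i - s j) (s i - s j) \<le> 8 / Suc N"
      using coercive[of "s i - s j"] energy_midpoint[OF sW] minimizing[of i] minimizing[of j] m[OF mid]
        sW subspace subspace_diff by fastforce
    also have "\<dots> < \<alpha> * e\<^sup>2"
    proof -
      have "0 < \<alpha> * e\<^sup>2" using \<open>0 < e\<close> coercivity_pos by simp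
      then show ?thesis using N by (simp add: field_simps)
    qed
    finally have "ip (s i - s j) (s i - s j) < e\<^sup>2"
      using coercivity_pos by simp
    then show ?thesis
      using \<open>0 < e\<close> by (metis abs_of_pos real_sqrt_abs real_sqrt_less_mono)
  qed
  then show "\<exists>N. \<forall>i\<ge>N. \<forall>j\<ge>N. sqrt (ip (s i - s j) (s i - s j)) < e" by blast
qed

lemma energy_perturbation_bound:
  assumes "d \<in> W"
  obtains c where "\<And>e. e \<in> W \<Longrightarrow> energy d \<le> energy (d + e) + c * sqrt (ip e e)"
proof -
  have "linear (\<lambda>x::'v. x)" by (simp add: linear_iff)
  then have "bounded_functional (\<lambda>e. A d e + (-1) * L e)"
    using assms bounded
    by (intro bounded_functional_add bounded_functional_cmult functional
        bounded_functional_pullback[OF A.semi_inner_product_on_axioms]) auto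
  then obtain c where c: "\<And>e. e \<in> W \<Longrightarrow> \<bar>A d e + (-1) * L e\<bar> \<le> c * sqrt (ip e e)"
    unfolding bounded_functional_def by blast
  have "energy d \<le> energy (d + e) + c * sqrt (ip e e)" if "e \<in> W" for e
    using energy_add_scale[OF assms that, of 1] c[OF that] A.nonneg[OF that] by simp
  then show ?thesis by (rule that)
qed

lemma minimizer_exists: "\<exists>d\<in>G. \<forall>x\<in>G. energy d \<le> energy x"
proof -
  define m where "m = Inf (energy ` G)"
  obtain b where "\<forall>u\<in>W. b \<le> energy u" using energy_bounded_below by blast
  then have bdd: "bdd_below (energy ` G)"
    using G_subset unfolding bdd_below_def by blast
  have m_le: "m \<le> energy x" if "x \<in> G" for x
    unfolding m_def using bdd that by (simp add: cInf_lower)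
  have "\<exists>u\<in>G. energy u < m + 1 / real (Suc n)" for n
  proof -
    have "energy ` G \<noteq> {}" using subspace_0[OF G_subspace] by blast
    from cInf_lessD[OF this, of "m + 1 / real (Suc n)"] show ?thesis by (auto simp: m_def)
  qed
  then obtain s where s: "\<And>n. s n \<in> G" and s_min: "\<And>n. energy (s n) \<le> m + 1 / real (Suc n)"
    by (metis less_le)
  obtain d where d: "d \<in> W" and conv: "(\<lambda>n. sqrt (ip (s n - d) (s n - d))) \<longlonglongrightarrow> 0"
    using complete[of s] s G_subset minimizing_sequence_Cauchy[OF s m_le s_min] by blast
  have "d \<in> G" using G_closed s d conv unfolding closed_subspace_def by blast
  obtain c where c: "\<And>e. e \<in> W \<Longrightarrow> energy d \<le> energy (d + e) + c * sqrt (ip e e)"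
    using energy_perturbation_bound[OF d] by blast
  have "energy d \<le> m + 1 / real (Suc n) + c * sqrt (ip (s n - d) (s n - d))" for n
  proof -
    have "s n - d \<in> W" using s G_subset d subspace_diff[OF subspace] by blast
    then show ?thesis using c[of "s n - d"] s_min[of n] by simp
  qed
  moreover have "(\<lambda>n. m + 1 / real (Suc n) + c * sqrt (ip (s n - d) (s n - d))) \<longlonglongrightarrow> m + 0 + c * 0"
    using LIMSEQ_inverse_real_of_nat conv by (intro tendsto_intros) (auto simp: inverse_eq_divide)
  ultimately have "energy d \<le> m"
    by (intro LIMSEQ_le_const[where X = "\<lambda>n. m + 1 / real (Suc n) + c * sqrt (ip (s n - d) (s n - d))"]) auto
  then show ?thesis using \<open>d \<in> G\<close> m_le by (blast intro: order_trans)
qed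

lemma minimizer_solves:
  assumes "d \<in> G" and minimal: "\<And>x. x \<in> G \<Longrightarrow> energy d \<le> energy x" and "w \<in> G"
  shows "A d w = L w"
proof -
  have W: "d \<in> W" "w \<in> W" using assms G_subset by auto
  have "(A d w - L w)\<^sup>2 \<le> 4 * (A w w / 2) * 0"
  proof (rule nonneg_quadratic_discrim_nonpos)
    show "0 \<le> A w w / 2" using A.nonneg[OF W(2)] by simp
    show "0 \<le> A w w / 2 * t\<^sup>2 + (A d w - L w) * t + 0" for t
    proof -
      have "d + t *\<^sub>R w \<in> G"
        using assms G_subspace by (simp add: subspace_add subspace_scale)
      then show ?thesis using minimal energy_add_scale[OF W, of t] by (fastforce simp: algebra_simps)
    qed
  qed
  then show ?thesis by simp
qed

theorem solution_exists_unique: "\<exists>!d. d \<in> G \<and> (\<forall>w\<in>G. A d w = L w)"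
proof (rule ex_ex1I)
  show "\<exists>d. d \<in> G \<and> (\<forall>w\<in>G. A d w = L w)"
    using minimizer_exists minimizer_solves by blast
next
  fix d1 d2
  assume d1: "d1 \<in> G \<and> (\<forall>w\<in>G. A d1 w = L w)" and d2: "d2 \<in> G \<and> (\<forall>w\<in>G. A d2 w = L w)"
  have e: "d1 - d2 \<in> G" using d1 d2 G_subspace subspace_diff by blast
  then have "A (d1 - d2) (d1 - d2) = 0"
    using d1 d2 G_subset A.diff_left by (simp add: subset_iff)
  then have "ip (d1 - d2) (d1 - d2) = 0"
    using coercive[of "d1 - d2"] nonneg[of "d1 - d2"] coercivity_pos e G_subset
    by (auto simp: mult_le_0_iff)
  moreover have "d1 - d2 \<in> W" using e G_subset by blast
  ultimately show "d1 = d2" using definite by (metis eq_iff_diff_eq_0)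
qed

end

section \<open>Square-integrable functions\<close>

definition square_integrable :: "'m measure \<Rightarrow> ('m \<Rightarrow> 'b::{real_inner, second_countable_topology}) \<Rightarrow> bool" where
  "square_integrable M u \<longleftrightarrow> u \<in> borel_measurable M \<and> integrable M (\<lambda>x. (norm (u x))\<^sup>2)"

definition L2_inner :: "'m measure \<Rightarrow> ('m \<Rightarrow> 'b::{real_inner, second_countable_topology}) \<Rightarrow> ('m \<Rightarrow> 'b) \<Rightarrow> real" where
  "L2_inner M u v = (\<integral>x. u x \<bullet> v x \<partial>M)"

lemma square_integrable_bound:
  assumes "square_integrable M u" "v \<in> borel_measurable M" "\<And>x. norm (v x) \<le> c * norm (u x)"
  shows "square_integrable M v"
proof -
  have "integrable M (\<lambda>x. (norm (v x))\<^sup>2)"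
  proof (rule Bochner_Integration.integrable_bound)
    show "integrable M (\<lambda>x. c\<^sup>2 * (norm (u x))\<^sup>2)" using assms(1) by (simp add: square_integrable_def)
    show "AE x in M. norm ((norm (v x))\<^sup>2) \<le> norm (c\<^sup>2 * (norm (u x))\<^sup>2)"
    proof (intro AE_I2)
      fix x
      have "(norm (v x))\<^sup>2 \<le> (c * norm (u x))\<^sup>2"
        using assms(3) norm_ge_zero by (intro power_mono) blast+
      then show "norm ((norm (v x))\<^sup>2) \<le> norm (c\<^sup>2 * (norm (u x))\<^sup>2)" by (simp add: power_mult_distrib)
    qed
  qed (use assms(2) in measurable)
  with assms(2) show ?thesis by (simp add: square_integrable_def)
qed

lemma square_integrable_inner_integrable:
  assumes "square_integrable M u" "square_integrable M v"
  shows "integrable M (\<lambda>x. u x \<bullet> v x)"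
proof (rule Bochner_Integration.integrable_bound)
  show "integrable M (\<lambda>x. (norm (u x))\<^sup>2 + (norm (v x))\<^sup>2)"
    using assms by (simp add: square_integrable_def)
  show "(\<lambda>x. u x \<bullet> v x) \<in> borel_measurable M"
    using assms by (simp add: square_integrable_def borel_measurable_inner)
  show "AE x in M. norm (u x \<bullet> v x) \<le> norm ((norm (u x))\<^sup>2 + (norm (v x))\<^sup>2)"
  proof (intro AE_I2)
    fix x
    have "norm (u x \<bullet> v x) \<le> norm (u x) * norm (v x)" using Cauchy_Schwarz_ineq2 by simp
    also have "\<dots> \<le> (norm (u x))\<^sup>2 + (norm (v x))\<^sup>2"
      using sum_squares_bound[of "norm (u x)" "norm (v x)"]
        mult_nonneg_nonneg[OF norm_ge_zero norm_ge_zero, of "u x" "v x"] by linarith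
    finally show "norm (u x \<bullet> v x) \<le> norm ((norm (u x))\<^sup>2 + (norm (v x))\<^sup>2)" by simp
  qed
qed

lemma square_integrable_add:
  assumes "square_integrable M u" "square_integrable M v"
  shows "square_integrable M (u + v)"
proof -
  have "integrable M (\<lambda>x. u x \<bullet> u x + 2 * (u x \<bullet> v x) + v x \<bullet> v x)"
    using assms by (intro Bochner_Integration.integrable_add integrable_mult_right
        square_integrable_inner_integrable)
  moreover have "u x \<bullet> u x + 2 * (u x \<bullet> v x) + v x \<bullet> v x = (norm (u x + v x))\<^sup>2" for x
    by (simp add: power2_norm_eq_inner algebra_simps inner_commute)
  ultimately show ?thesis
    using assms by (auto simp: square_integrable_def plus_fun_def intro: borel_measurable_add)
qed

lemma square_integrable_scaleR:
  "square_integrable M u \<Longrightarrow> square_integrable M (c *\<^sub>R u)"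
  by (rule square_integrable_bound[where c = "\<bar>c\<bar>"])
    (auto simp: square_integrable_def scaleR_fun_def)

lemma L2_semi_inner_product: "semi_inner_product_on {u. square_integrable M u} (L2_inner M)"
proof
  show "subspace {u. square_integrable M u}"
    by (rule subspaceI) (simp_all add: square_integrable_add square_integrable_scaleR,
        simp add: square_integrable_def zero_fun_def)
next
  show "L2_inner M u v = L2_inner M v u" for u v
    by (simp add: L2_inner_def inner_commute)
qed (simp_all add: L2_inner_def inner_add_left square_integrable_inner_integrable)

text \<open>Integrals over \<Omega> are integrals over the whole space of zero extensions, so no
  measurability of \<Omega> is needed.\<close>

definition zero_ext :: "'a set \<Rightarrow> ('a \<Rightarrow> 'b::real_vector) \<Rightarrow> 'a \<Rightarrow> 'b" where
  "zero_ext \<Omega> u = (\<lambda>x. indicator \<Omega> x *\<^sub>R u x)"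

lemma linear_zero_ext: "linear (zero_ext \<Omega>)"
  by (simp add: linear_iff zero_ext_def fun_eq_iff scaleR_add_right)

lemma set_integral_inner_eq_L2_inner:
  "(LINT x:\<Omega>|M. u x \<bullet> v x) = L2_inner M (zero_ext \<Omega> u) (zero_ext \<Omega> v)"
  unfolding set_lebesgue_integral_def L2_inner_def zero_ext_def
  by (intro Bochner_Integration.integral_cong) (auto simp: indicator_def)

lemma L2field_iff_square_integrable: "L2field \<Omega> u \<longleftrightarrow> square_integrable lebesgue (zero_ext \<Omega> u)"
proof -
  have "(\<lambda>x. indicator \<Omega> x *\<^sub>R (norm (u x))\<^sup>2) = (\<lambda>x. (norm (zero_ext \<Omega> u x))\<^sup>2)"
    by (simp add: zero_ext_def indicator_def fun_eq_iff)
  then show ?thesis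
    by (simp add: L2field_def square_integrable_def set_borel_measurable_def set_integrable_def zero_ext_def)
qed

lemma L2ip3_eq_L2_inner: "L2ip3 \<Omega> u v = L2_inner lebesgue (zero_ext \<Omega> u) (zero_ext \<Omega> v)"
  unfolding L2ip3_def by (rule set_integral_inner_eq_L2_inner)

lemma L2ip_eq_L2_inner: "L2ip \<Omega> g h = L2_inner lebesgue (zero_ext \<Omega> g) (zero_ext \<Omega> h)"
  using set_integral_inner_eq_L2_inner[where \<Omega> = \<Omega> and M = lebesgue and u = g and v = h]
  by (simp add: L2ip_def)

lemma penalty_eq_integral:
  "penalty \<Omega> \<epsilon> g = 1 / (2 * \<epsilon>) * (\<integral>x. (max (zero_ext \<Omega> g x - 1) 0)\<^sup>2 \<partial>lebesgue)"
proof -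
  have "(\<lambda>x. indicator \<Omega> x *\<^sub>R (max (g x - 1) 0)\<^sup>2) = (\<lambda>x. (max (zero_ext \<Omega> g x - 1) 0)\<^sup>2)"
    by (simp add: zero_ext_def indicator_def fun_eq_iff)
  then show ?thesis by (simp add: penalty_def set_lebesgue_integral_def)
qed

lemma linear_comp3: "linear comp3"
  by (simp add: linear_iff comp3_def fun_eq_iff)

lemma zero_ext_comp3: "zero_ext \<Omega> (comp3 u) = (\<lambda>x. zero_ext \<Omega> u x $ 3)"
  by (simp add: zero_ext_def comp3_def fun_eq_iff)

lemma square_integrable_component:
  fixes U :: "'m \<Rightarrow> real^'n"
  assumes "square_integrable M U"
  shows "square_integrable M (\<lambda>x. U x $ i)"
proof (rule square_integrable_bound[OF assms, where c = 1])
  have "U \<in> borel_measurable M" using assms by (simp add: square_integrable_def)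
  then show "(\<lambda>x. U x $ i) \<in> borel_measurable M" by (rule measurable_compose[OF _ borel_measurable_nth])
next
  fix x
  show "norm (U x $ i) \<le> 1 * norm (U x)" by (simp add: component_le_norm_cart)
qed

lemma L2_inner_component_le:
  fixes U :: "'m \<Rightarrow> real^'n"
  assumes "square_integrable M U"
  shows "L2_inner M (\<lambda>x. U x $ i) (\<lambda>x. U x $ i) \<le> L2_inner M U U"
  unfolding L2_inner_def
proof (rule integral_mono)
  show "integrable M (\<lambda>x. U x $ i \<bullet> U x $ i)"
    using square_integrable_component[OF assms] square_integrable_component[OF assms]
    by (rule square_integrable_inner_integrable)
  show "integrable M (\<lambda>x. U x \<bullet> U x)"
    using assms assms by (rule square_integrable_inner_integrable)
  fix x
  have "\<bar>U x $ i\<bar>\<^sup>2 \<le> (norm (U x))\<^sup>2"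
    by (intro power_mono component_le_norm_cart) simp
  then show "U x $ i \<bullet> U x $ i \<le> U x \<bullet> U x"
    by (simp add: dot_square_norm power2_eq_square)
qed

section \<open>Convex--concave splitting of the penalty\<close>

definition P_ccv :: "real \<Rightarrow> real" where
  "P_ccv s = (if s > 1 then -2 * s + 1 else - s\<^sup>2)"

lemma pos_part_sq_split: "(max (s - 1) 0)\<^sup>2 = s\<^sup>2 + P_ccv s"
  by (simp add: P_ccv_def power2_eq_square algebra_simps)

lemma P_ccv_concave: "P_ccv b \<le> P_ccv a + p_ccv a * (b - a)"
proof -
  have "0 \<le> (a - 1) * (a + 1 - 2 * b)" if "a \<le> 1" "b > 1"
    using that by (intro mult_nonpos_nonpos) auto
  moreover have "0 \<le> (b - 1)\<^sup>2" "0 \<le> (a - b)\<^sup>2" by simp_all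
  ultimately show ?thesis
    by (auto simp: P_ccv_def p_ccv_def power2_eq_square algebra_simps)
qed

lemma pos_part_sq_step: "(max (b - 1) 0)\<^sup>2 - (max (a - 1) 0)\<^sup>2 \<le> (2 * b + p_ccv a) * (b - a)"
proof -
  have "b\<^sup>2 - a\<^sup>2 \<le> 2 * b * (b - a)"
    using zero_le_power2[of "b - a"] by (simp add: power2_eq_square algebra_simps)
  then show ?thesis
    using P_ccv_concave[of b a] by (simp add: pos_part_sq_split algebra_simps)
qed

lemma p_ccv_abs_le: "\<bar>p_ccv s\<bar> \<le> 2 * \<bar>s\<bar>"
  by (auto simp: p_ccv_def abs_mult)

lemma p_ccv_measurable [measurable]: "p_ccv \<in> borel_measurable borel"
proof (rule borel_measurable_continuous_onI)
  have p_ccv_min: "p_ccv = (\<lambda>s. -2 * min s 1)" by (auto simp: p_ccv_def fun_eq_iff)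
  show "continuous_on UNIV p_ccv" unfolding p_ccv_min by (intro continuous_intros)
qed

lemma square_integrable_p_ccv:
  "square_integrable M a \<Longrightarrow> square_integrable M (\<lambda>x. p_ccv (a x))"
  by (rule square_integrable_bound[where c = 2]) (auto simp: square_integrable_def p_ccv_abs_le)

lemma integrable_pos_part_sq:
  fixes a :: "'m \<Rightarrow> real"
  assumes "square_integrable M a"
  shows "integrable M (\<lambda>x. (max (a x - 1) 0)\<^sup>2)"
proof (rule Bochner_Integration.integrable_bound)
  show "integrable M (\<lambda>x. (norm (a x))\<^sup>2)" using assms by (simp add: square_integrable_def)
  have "a \<in> borel_measurable M" using assms by (simp add: square_integrable_def)
  then show "(\<lambda>x. (max (a x - 1) 0)\<^sup>2) \<in> borel_measurable M" by measurable
  show "AE x in M. norm ((max (a x - 1) 0)\<^sup>2) \<le> norm ((norm (a x))\<^sup>2)"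
  proof (intro AE_I2)
    fix x
    have "\<bar>max (a x - 1) 0\<bar>\<^sup>2 \<le> \<bar>a x\<bar>\<^sup>2" by (intro power_mono) auto
    then show "norm ((max (a x - 1) 0)\<^sup>2) \<le> norm ((norm (a x))\<^sup>2)" by simp
  qed
qed

lemma integral_pos_part_sq_step:
  fixes a h :: "'m \<Rightarrow> real"
  assumes a: "square_integrable M a" and h: "square_integrable M h"
  shows "(\<integral>x. (max (a x + h x - 1) 0)\<^sup>2 \<partial>M) - (\<integral>x. (max (a x - 1) 0)\<^sup>2 \<partial>M)
    \<le> 2 * L2_inner M (a + h) h + L2_inner M (\<lambda>x. p_ccv (a x)) h"
proof -
  have ah: "square_integrable M (a + h)" using a h by (rule square_integrable_add)
  have i1: "integrable M (\<lambda>x. (a x + h x) * h x)"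
    using square_integrable_inner_integrable[OF ah h] by simp
  have i2: "integrable M (\<lambda>x. p_ccv (a x) * h x)"
    using square_integrable_inner_integrable[OF square_integrable_p_ccv[OF a] h] by simp
  have "(\<integral>x. (max (a x + h x - 1) 0)\<^sup>2 \<partial>M) - (\<integral>x. (max (a x - 1) 0)\<^sup>2 \<partial>M)
      = (\<integral>x. (max (a x + h x - 1) 0)\<^sup>2 - (max (a x - 1) 0)\<^sup>2 \<partial>M)"
    using integrable_pos_part_sq[OF ah] integrable_pos_part_sq[OF a] by simp
  also have "\<dots> \<le> (\<integral>x. 2 * ((a + h) x \<bullet> h x) + p_ccv (a x) \<bullet> h x \<partial>M)"
  proof (rule integral_mono)
    show "integrable M (\<lambda>x. (max (a x + h x - 1) 0)\<^sup>2 - (max (a x - 1) 0)\<^sup>2)"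
      using integrable_pos_part_sq[OF ah] integrable_pos_part_sq[OF a] by simp
    show "integrable M (\<lambda>x. 2 * ((a + h) x \<bullet> h x) + p_ccv (a x) \<bullet> h x)"
      using i1 i2 by simp
    show "(max (a x + h x - 1) 0)\<^sup>2 - (max (a x - 1) 0)\<^sup>2 \<le> 2 * ((a + h) x \<bullet> h x) + p_ccv (a x) \<bullet> h x" for x
      using pos_part_sq_step[of "a x + h x" "a x"] by (simp add: algebra_simps)
  qed
  also have "\<dots> = 2 * L2_inner M (a + h) h + L2_inner M (\<lambda>x. p_ccv (a x)) h"
    using i1 i2 by (simp add: L2_inner_def)
  finally show ?thesis .
qed

section \<open>The penalized gradient flow\<close>

lemma hilbert_on_imp_hilbert_space_on:
  assumes "hilbert_on W ip"
  shows "hilbert_space_on W ip"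
proof -
  have lin: "ip (a *\<^sub>R u + b *\<^sub>R v) w = a * ip u w + b * ip v w" if "u \<in> W" "v \<in> W" "w \<in> W" for a b u v w
    using assms that unfolding hilbert_on_def vadd_eq_plus vscale_eq_scaleR by blast
  have W0: "0 \<in> W" using assms unfolding hilbert_on_def zero_fun_def by blast
  show ?thesis
  proof unfold_locales
    show "subspace W"
      using assms W0 unfolding hilbert_on_def subspace_def vadd_eq_plus vscale_eq_scaleR by blast
    show "ip (u + v) w = ip u w + ip v w" if "u \<in> W" "v \<in> W" "w \<in> W" for u v w
      using lin[OF that, of 1 1] by simp
    show "ip (c *\<^sub>R u) w = c * ip u w" if "u \<in> W" "w \<in> W" for c u w
      using lin[OF that(1) that, of c 0] by simp
    show "0 \<le> ip u u" if "u \<in> W" for u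
    proof (cases "u = 0")
      case True
      then show ?thesis using lin[OF W0 W0 W0, of 0 0] by simp
    next
      case False
      then show ?thesis using assms that unfolding hilbert_on_def zero_fun_def by force
    qed
    show "u = 0" if "u \<in> W" "ip u u = 0" for u
      using assms that unfolding hilbert_on_def zero_fun_def by force
    have "\<forall>s. (\<forall>n. s n \<in> W) \<longrightarrow>
        (\<forall>e>0. \<exists>N. \<forall>m\<ge>N. \<forall>n\<ge>N. sqrt (ip (s m - s n) (s m - s n)) < e) \<longrightarrow>
        (\<exists>w\<in>W. (\<lambda>n. sqrt (ip (s n - w) (s n - w))) \<longlonglongrightarrow> 0)"
      using assms unfolding hilbert_on_def vdiff_eq_minus by blast
    then show "\<exists>w\<in>W. (\<lambda>n. sqrt (ip (s n - w) (s n - w))) \<longlonglongrightarrow> 0"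
      if "\<And>n. s n \<in> W" "\<forall>e>0. \<exists>N. \<forall>m\<ge>N. \<forall>n\<ge>N. sqrt (ip (s m - s n) (s m - s n)) < e" for s
      using that by blast
  qed (use assms in \<open>simp add: hilbert_on_def\<close>)
qed

lemma closed_subspace_of_imp_closed_subspace:
  assumes "closed_subspace_of G W ip" "hilbert_space_on W ip"
  shows "hilbert_space_on.closed_subspace W ip G"
  using assms(1) unfolding hilbert_space_on.closed_subspace_def[OF assms(2)] closed_subspace_of_def
    subspace_def vadd_eq_plus vscale_eq_scaleR vdiff_eq_minus zero_fun_def by blast

lemma L2ip3_semi_inner_product: "semi_inner_product_on {u. L2field \<Omega> u} (L2ip3 \<Omega>)"
  using semi_inner_product_on_vimage[OF L2_semi_inner_product linear_zero_ext]
  by (simp add: vimage_def L2field_iff_square_integrable L2ip3_eq_L2_inner[abs_def])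

abbreviation L2_scalar :: "(real^2) set \<Rightarrow> (real^2 \<Rightarrow> real) set" where
  "L2_scalar \<Omega> \<equiv> {g. square_integrable lebesgue (zero_ext \<Omega> g)}"

lemma L2ip_semi_inner_product: "semi_inner_product_on (L2_scalar \<Omega>) (L2ip \<Omega>)"
  using semi_inner_product_on_vimage[OF L2_semi_inner_product linear_zero_ext]
  by (simp add: vimage_def L2ip_eq_L2_inner[abs_def])

lemma comp3_in_L2_scalar: "L2field \<Omega> u \<Longrightarrow> comp3 u \<in> L2_scalar \<Omega>"
  by (simp add: L2field_iff_square_integrable zero_ext_comp3 square_integrable_component)

lemma zero_ext_p_ccv: "zero_ext \<Omega> (\<lambda>x. p_ccv (g x)) = (\<lambda>x. p_ccv (zero_ext \<Omega> g x))"
  by (simp add: zero_ext_def indicator_def p_ccv_def fun_eq_iff)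

lemma p_ccv_in_L2_scalar: "g \<in> L2_scalar \<Omega> \<Longrightarrow> (\<lambda>x. p_ccv (g x)) \<in> L2_scalar \<Omega>"
  by (simp add: zero_ext_p_ccv square_integrable_p_ccv)

lemma L2ip_comp3_le: "L2field \<Omega> u \<Longrightarrow> L2ip \<Omega> (comp3 u) (comp3 u) \<le> L2ip3 \<Omega> u u"
  by (simp add: L2ip_eq_L2_inner L2ip3_eq_L2_inner zero_ext_comp3 L2field_iff_square_integrable
      L2_inner_component_le)

lemma penalty_increment_le:
  assumes "g \<in> L2_scalar \<Omega>" "h \<in> L2_scalar \<Omega>" "0 < \<epsilon>"
  shows "penalty \<Omega> \<epsilon> (g + h) - penalty \<Omega> \<epsilon> g
    \<le> 1 / \<epsilon> * L2ip \<Omega> (g + h) h + 1 / (2 * \<epsilon>) * L2ip \<Omega> (\<lambda>x. p_ccv (g x)) h"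
proof -
  have "zero_ext \<Omega> (g + h) = zero_ext \<Omega> g + zero_ext \<Omega> h"
    by (simp add: linear_add[OF linear_zero_ext])
  then have "(\<integral>x. (max (zero_ext \<Omega> (g + h) x - 1) 0)\<^sup>2 \<partial>lebesgue)
      - (\<integral>x. (max (zero_ext \<Omega> g x - 1) 0)\<^sup>2 \<partial>lebesgue)
    \<le> 2 * L2ip \<Omega> (g + h) h + L2ip \<Omega> (\<lambda>x. p_ccv (g x)) h"
    using integral_pos_part_sq_step[of lebesgue "zero_ext \<Omega> g" "zero_ext \<Omega> h"] assms
    by (simp add: L2ip_eq_L2_inner zero_ext_p_ccv)
  then have "penalty \<Omega> \<epsilon> (g + h) - penalty \<Omega> \<epsilon> g
      \<le> 1 / (2 * \<epsilon>) * (2 * L2ip \<Omega> (g + h) h + L2ip \<Omega> (\<lambda>x. p_ccv (g x)) h)"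
    using assms(3) unfolding penalty_eq_integral right_diff_distrib[symmetric]
    by (intro mult_left_mono) auto
  then show ?thesis
    using assms(3) by (simp add: field_simps)
qed

definition ccv_step ::
  "(real^2) set \<Rightarrow> (vfield \<Rightarrow> vfield \<Rightarrow> real) \<Rightarrow> vfield \<Rightarrow> real \<Rightarrow> real \<Rightarrow> vfield set \<Rightarrow>
   vfield \<Rightarrow> vfield \<Rightarrow> bool" where
  "ccv_step \<omega> ip f \<epsilon> \<tau> G z d \<longleftrightarrow> d \<in> G \<and>
     (\<forall>w\<in>G. ip d w + energyI' \<omega> ip f (z + \<tau> *\<^sub>R d) w
              + 1 / \<epsilon> * L2ip \<omega> (comp3 (z + \<tau> *\<^sub>R d)) (comp3 w)
            = - 1 / (2 * \<epsilon>) * L2ip \<omega> (\<lambda>x. p_ccv (comp3 z x)) (comp3 w))"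

lemma dt_Suc: "\<tau> \<noteq> 0 \<Longrightarrow> y (Suc k) = y k + \<tau> *\<^sub>R dt \<tau> y (Suc k)"
  by (simp add: dt_def vscale_eq_scaleR vdiff_eq_minus)

lemma ccv_flow_iff_steps:
  assumes "\<tau> \<noteq> 0"
  shows "ccv_flow \<omega> ip F f \<epsilon> \<tau> y0 y \<longleftrightarrow>
    y 0 = y0 \<and> (\<forall>k. ccv_step \<omega> ip f \<epsilon> \<tau> (F k) (y k) (dt \<tau> y (Suc k)))"
proof -
  have shift: "(\<forall>k\<ge>1. P k) \<longleftrightarrow> (\<forall>k. P (Suc k))" for P
    by (metis One_nat_def Suc_le_D Suc_le_mono le0)
  show ?thesis
    unfolding ccv_flow_def ccv_step_def shift using dt_Suc[OF assms, of y] by simp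
qed

locale ccv_setting =
  fixes \<omega> :: "(real^2) set" and W :: "vfield set" and ip :: "vfield \<Rightarrow> vfield \<Rightarrow> real"
    and f :: vfield and \<epsilon> \<tau> :: real
  assumes hilbert: "hilbert_on W ip" and embedded: "cont_embedded_L2 \<omega> W ip"
    and f_L2: "L2field \<omega> f" and eps_pos: "0 < \<epsilon>" and tau_pos: "0 < \<tau>"
begin

sublocale W: hilbert_space_on W ip
  by (rule hilbert_on_imp_hilbert_space_on[OF hilbert])

lemma W_L2: "u \<in> W \<Longrightarrow> L2field \<omega> u"
  using embedded unfolding cont_embedded_L2_def by blast

lemma embedding_bound:
  obtains C where "\<And>w. w \<in> W \<Longrightarrow> L2ip3 \<omega> w w \<le> C * ip w w"
    "\<And>w. w \<in> W \<Longrightarrow> L2ip \<omega> (comp3 w) (comp3 w) \<le> C * ip w w"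
proof -
  obtain C where C: "\<And>w. w \<in> W \<Longrightarrow> L2ip3 \<omega> w w \<le> C * ip w w"
    using embedded unfolding cont_embedded_L2_def by blast
  moreover have "L2ip \<omega> (comp3 w) (comp3 w) \<le> C * ip w w" if "w \<in> W" for w
    using L2ip_comp3_le[OF W_L2[OF that]] C[OF that] by linarith
  ultimately show ?thesis using that by blast
qed

lemma comp3_semi_inner_product: "semi_inner_product_on W (\<lambda>u v. L2ip \<omega> (comp3 u) (comp3 v))"
  using W_L2 comp3_in_L2_scalar
  by (blast intro: semi_inner_product_on_pullback[OF L2ip_semi_inner_product W.subspace linear_comp3])

sublocale third: semi_inner_product_on W "\<lambda>u v. L2ip \<omega> (comp3 u) (comp3 v)"
  by (rule comp3_semi_inner_product)

definition step_form :: "vfield \<Rightarrow> vfield \<Rightarrow> real" where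
  "step_form d w = (1 + \<tau>) * ip d w + \<tau> / \<epsilon> * L2ip \<omega> (comp3 d) (comp3 w)"

definition step_rhs :: "vfield \<Rightarrow> vfield \<Rightarrow> real" where
  "step_rhs z w = L2ip3 \<omega> f w - ip z w - 1 / \<epsilon> * L2ip \<omega> (comp3 z) (comp3 w)
     - 1 / (2 * \<epsilon>) * L2ip \<omega> (\<lambda>x. p_ccv (comp3 z x)) (comp3 w)"

lemma step_iff:
  assumes "z \<in> W" "G \<subseteq> W"
  shows "ccv_step \<omega> ip f \<epsilon> \<tau> G z d \<longleftrightarrow> d \<in> G \<and> (\<forall>w\<in>G. step_form d w = step_rhs z w)"
proof -
  have "ip d w + energyI' \<omega> ip f (z + \<tau> *\<^sub>R d) w + 1 / \<epsilon> * L2ip \<omega> (comp3 (z + \<tau> *\<^sub>R d)) (comp3 w)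
        - (- 1 / (2 * \<epsilon>) * L2ip \<omega> (\<lambda>x. p_ccv (comp3 z x)) (comp3 w))
      = step_form d w - step_rhs z w" if "d \<in> W" "w \<in> W" for d w
    using assms(1) that eps_pos
    by (simp add: energyI'_def step_form_def step_rhs_def W.add_scale_left third.add_scale_left field_simps)
  then have "ip d w + energyI' \<omega> ip f (z + \<tau> *\<^sub>R d) w + 1 / \<epsilon> * L2ip \<omega> (comp3 (z + \<tau> *\<^sub>R d)) (comp3 w)
        = - 1 / (2 * \<epsilon>) * L2ip \<omega> (\<lambda>x. p_ccv (comp3 z x)) (comp3 w)
      \<longleftrightarrow> step_form d w = step_rhs z w" if "d \<in> W" "w \<in> W" for d w
    using that by (metis eq_iff_diff_eq_0)
  then show ?thesis
    using assms(2) unfolding ccv_step_def by blast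
qed

lemma step_form_semi_inner_product: "semi_inner_product_on W step_form"
proof -
  have "step_form = (\<lambda>u v. (1 + \<tau>) * ip u v + \<tau> / \<epsilon> * L2ip \<omega> (comp3 u) (comp3 v))"
    by (simp add: fun_eq_iff step_form_def)
  then show ?thesis
    using semi_inner_product_on_combination[OF W.semi_inner_product_on_axioms
        comp3_semi_inner_product, of "1 + \<tau>" "\<tau> / \<epsilon>"] tau_pos eps_pos by simp
qed

lemma step_rhs_bounded:
  assumes z: "z \<in> W"
  shows "W.bounded_functional (step_rhs z)"
proof -
  obtain C where C: "\<And>w. w \<in> W \<Longrightarrow> L2ip3 \<omega> w w \<le> C * ip w w"
    "\<And>w. w \<in> W \<Longrightarrow> L2ip \<omega> (comp3 w) (comp3 w) \<le> C * ip w w"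
    using embedding_bound by metis
  have id: "linear (\<lambda>u::vfield. u)" by (simp add: linear_iff)
  have f_term: "W.bounded_functional (\<lambda>w. L2ip3 \<omega> f w)"
    by (rule W.bounded_functional_pullback[OF L2ip3_semi_inner_product id, where K = C])
      (use f_L2 W_L2 C(1) in auto)
  have z_term: "W.bounded_functional (\<lambda>w. ip z w)"
    by (rule W.bounded_functional_pullback[OF W.semi_inner_product_on_axioms id, where K = 1])
      (use z in auto)
  have third_term: "W.bounded_functional (\<lambda>w. L2ip \<omega> g (comp3 w))" if "g \<in> L2_scalar \<omega>" for g
    by (rule W.bounded_functional_pullback[OF L2ip_semi_inner_product linear_comp3, where K = C])
      (use that W_L2 comp3_in_L2_scalar C(2) in auto)
  have z3: "comp3 z \<in> L2_scalar \<omega>" using comp3_in_L2_scalar W_L2 z by blast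
  have sum: "W.bounded_functional (\<lambda>w. L2ip3 \<omega> f w + (-1) * ip z w + (-1 / \<epsilon>) * L2ip \<omega> (comp3 z) (comp3 w)
      + (-1 / (2 * \<epsilon>)) * L2ip \<omega> (\<lambda>x. p_ccv (comp3 z x)) (comp3 w))"
    by (intro W.bounded_functional_add W.bounded_functional_cmult f_term z_term
        third_term z3 p_ccv_in_L2_scalar)
  have rhs: "step_rhs z = (\<lambda>w. L2ip3 \<omega> f w + (-1) * ip z w + (-1 / \<epsilon>) * L2ip \<omega> (comp3 z) (comp3 w)
      + (-1 / (2 * \<epsilon>)) * L2ip \<omega> (\<lambda>x. p_ccv (comp3 z x)) (comp3 w))"
    by (simp add: fun_eq_iff step_rhs_def)
  show ?thesis unfolding rhs by (rule sum)
qed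

lemma step_exists_unique:
  assumes G: "W.closed_subspace G" and z: "z \<in> W"
  shows "\<exists>!d. ccv_step \<omega> ip f \<epsilon> \<tau> G z d"
proof -
  obtain C where C: "\<And>w. w \<in> W \<Longrightarrow> L2ip \<omega> (comp3 w) (comp3 w) \<le> C * ip w w"
    using embedding_bound by metis
  have "symmetric_lax_milgram W ip step_form G (step_rhs z) (1 + \<tau>) (1 + \<tau> + \<tau> / \<epsilon> * C)"
  proof (rule symmetric_lax_milgram.intro[OF W.hilbert_space_on_axioms step_form_semi_inner_product],
      rule symmetric_lax_milgram_axioms.intro)
    show "W.closed_subspace G" by (fact G)
    show "W.bounded_functional (step_rhs z)" using z by (rule step_rhs_bounded)
    show "0 < 1 + \<tau>" using tau_pos by simp
    show "(1 + \<tau>) * ip u u \<le> step_form u u" if "u \<in> W" for u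
      using third.nonneg[OF that] tau_pos eps_pos by (simp add: step_form_def)
    show "step_form u u \<le> (1 + \<tau> + \<tau> / \<epsilon> * C) * ip u u" if "u \<in> W" for u
      using mult_left_mono[OF C[OF that], of "\<tau> / \<epsilon>"] tau_pos eps_pos
      by (simp add: step_form_def algebra_simps)
  qed
  moreover have "G \<subseteq> W" using G by (rule W.closed_subspace_subset)
  ultimately show ?thesis
    using symmetric_lax_milgram.solution_exists_unique step_iff[OF z] by simp
qed

lemma energyI_step:
  assumes z: "z \<in> W" and d: "d \<in> W"
  shows "energyI \<omega> ip f (z + \<tau> *\<^sub>R d)
    = energyI \<omega> ip f z + \<tau> * ip (z + \<tau> *\<^sub>R d) d - \<tau>\<^sup>2 / 2 * ip d d - \<tau> * L2ip3 \<omega> f d"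
proof -
  interpret L2: semi_inner_product_on "{u. L2field \<omega> u}" "L2ip3 \<omega>" by (rule L2ip3_semi_inner_product)
  have u: "z + \<tau> *\<^sub>R d \<in> W" using z d W.subspace by (simp add: subspace_add subspace_scale)
  have "(normstar ip v)\<^sup>2 = ip v v" if "v \<in> W" for v
    using W.nonneg[OF that] by (simp add: normstar_def)
  moreover have "ip (z + \<tau> *\<^sub>R d) (z + \<tau> *\<^sub>R d) = ip z z + 2 * \<tau> * ip z d + \<tau>\<^sup>2 * ip d d"
    using z d by (rule W.expand_square)
  moreover have "ip (z + \<tau> *\<^sub>R d) d = ip z d + \<tau> * ip d d"
    using z d d by (rule W.add_scale_left)
  moreover have "L2ip3 \<omega> f (z + \<tau> *\<^sub>R d) = L2ip3 \<omega> f z + \<tau> * L2ip3 \<omega> f d"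
    using f_L2 W_L2 z d by (simp add: L2.add_scale_right)
  ultimately show ?thesis
    using z u unfolding energyI_def by (simp add: power2_eq_square algebra_simps)
qed

lemma penalty_step_le:
  assumes z: "z \<in> W" and d: "d \<in> W"
  shows "penalty \<omega> \<epsilon> (comp3 (z + \<tau> *\<^sub>R d)) - penalty \<omega> \<epsilon> (comp3 z)
    \<le> \<tau> * (1 / \<epsilon> * L2ip \<omega> (comp3 (z + \<tau> *\<^sub>R d)) (comp3 d)
           + 1 / (2 * \<epsilon>) * L2ip \<omega> (\<lambda>x. p_ccv (comp3 z x)) (comp3 d))"
proof -
  interpret L2s: semi_inner_product_on "L2_scalar \<omega>" "L2ip \<omega>" by (rule L2ip_semi_inner_product)
  have u: "z + \<tau> *\<^sub>R d \<in> W" using z d W.subspace by (simp add: subspace_add subspace_scale)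
  have z3: "comp3 z \<in> L2_scalar \<omega>" and d3: "comp3 d \<in> L2_scalar \<omega>"
    and u3: "comp3 (z + \<tau> *\<^sub>R d) \<in> L2_scalar \<omega>"
    using comp3_in_L2_scalar W_L2 z d u by blast+
  have "comp3 (z + \<tau> *\<^sub>R d) = comp3 z + \<tau> *\<^sub>R comp3 d"
    by (simp add: linear_add[OF linear_comp3] linear_scale[OF linear_comp3])
  moreover have "\<tau> *\<^sub>R comp3 d \<in> L2_scalar \<omega>"
    by (rule subspace_scale[OF L2s.subspace d3])
  ultimately have "penalty \<omega> \<epsilon> (comp3 (z + \<tau> *\<^sub>R d)) - penalty \<omega> \<epsilon> (comp3 z)
      \<le> 1 / \<epsilon> * L2ip \<omega> (comp3 (z + \<tau> *\<^sub>R d)) (\<tau> *\<^sub>R comp3 d)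
        + 1 / (2 * \<epsilon>) * L2ip \<omega> (\<lambda>x. p_ccv (comp3 z x)) (\<tau> *\<^sub>R comp3 d)"
    using penalty_increment_le[OF z3 _ eps_pos] by simp
  also have "\<dots> = \<tau> * (1 / \<epsilon> * L2ip \<omega> (comp3 (z + \<tau> *\<^sub>R d)) (comp3 d)
      + 1 / (2 * \<epsilon>) * L2ip \<omega> (\<lambda>x. p_ccv (comp3 z x)) (comp3 d))"
    using u3 d3 p_ccv_in_L2_scalar[OF z3] by (simp add: L2s.scale_right algebra_simps)
  finally show ?thesis .
qed

lemma step_energy_decay:
  assumes z: "z \<in> W" and G: "G \<subseteq> W" and step: "ccv_step \<omega> ip f \<epsilon> \<tau> G z d"
  shows "energyI \<omega> ip f (z + \<tau> *\<^sub>R d) + penalty \<omega> \<epsilon> (comp3 (z + \<tau> *\<^sub>R d)) + \<tau> * (normstar ip d)\<^sup>2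
    \<le> energyI \<omega> ip f z + penalty \<omega> \<epsilon> (comp3 z)"
proof -
  have d: "d \<in> G" "d \<in> W" using step G unfolding ccv_step_def by blast+
  define u where "u = z + \<tau> *\<^sub>R d"
  define Q where "Q = L2ip \<omega> (comp3 u) (comp3 d)"
  define P where "P = L2ip \<omega> (\<lambda>x. p_ccv (comp3 z x)) (comp3 d)"
  have "ip d d + (ip u d - L2ip3 \<omega> f d) + 1 / \<epsilon> * Q = - 1 / (2 * \<epsilon>) * P"
    using step d unfolding ccv_step_def energyI'_def u_def Q_def P_def by blast
  then have "1 / \<epsilon> * Q + 1 / (2 * \<epsilon>) * P = L2ip3 \<omega> f d - ip d d - ip u d"
    by (simp add: algebra_simps)
  then have "\<tau> * (1 / \<epsilon> * Q + 1 / (2 * \<epsilon>) * P) = \<tau> * L2ip3 \<omega> f d - \<tau> * ip d d - \<tau> * ip u d"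
    by (simp add: right_diff_distrib)
  moreover have "\<tau> * (normstar ip d)\<^sup>2 = \<tau> * ip d d" and "0 \<le> \<tau>\<^sup>2 / 2 * ip d d"
    using W.nonneg[OF d(2)] by (simp_all add: normstar_def)
  ultimately show ?thesis
    using energyI_step[OF z d(2)] penalty_step_le[OF z d(2)] unfolding u_def Q_def P_def by linarith
qed

lemma flow_iff_steps:
  "ccv_flow \<omega> ip F f \<epsilon> \<tau> y0 y \<longleftrightarrow> y 0 = y0 \<and> (\<forall>k. ccv_step \<omega> ip f \<epsilon> \<tau> (F k) (y k) (dt \<tau> y (Suc k)))"
  using tau_pos by (simp add: ccv_flow_iff_steps)

lemma flow_in_W:
  assumes F: "\<And>k. W.closed_subspace (F k)" and y0: "y0 \<in> W" and flow: "ccv_flow \<omega> ip F f \<epsilon> \<tau> y0 y"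
  shows "y k \<in> W"
proof (induction k)
  case 0
  then show ?case using flow y0 by (simp add: flow_iff_steps)
next
  case (Suc k)
  have "dt \<tau> y (Suc k) \<in> W"
    using flow W.closed_subspace_subset[OF F] unfolding flow_iff_steps ccv_step_def by blast
  then have "y k + \<tau> *\<^sub>R dt \<tau> y (Suc k) \<in> W"
    using Suc.IH by (intro subspace_add[OF W.subspace] subspace_scale[OF W.subspace])
  moreover have "y (Suc k) = y k + \<tau> *\<^sub>R dt \<tau> y (Suc k)"
    using tau_pos by (simp add: dt_Suc)
  ultimately show ?case by (simp only:)
qed

lemma flow_exists:
  assumes F: "\<And>k. W.closed_subspace (F k)" and y0: "y0 \<in> W"
  shows "\<exists>y. ccv_flow \<omega> ip F f \<epsilon> \<tau> y0 y"
proof -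
  define step where "step k z = (THE d. ccv_step \<omega> ip f \<epsilon> \<tau> (F k) z d)" for k z
  have step: "ccv_step \<omega> ip f \<epsilon> \<tau> (F k) z (step k z)" if "z \<in> W" for k z
    unfolding step_def using step_exists_unique[OF F that] by (rule theI')
  define y where "y = rec_nat y0 (\<lambda>k z. z + \<tau> *\<^sub>R step k z)"
  have y_Suc: "y (Suc k) = y k + \<tau> *\<^sub>R step k (y k)" for k
    by (simp add: y_def)
  have yW: "y k \<in> W" for k
  proof (induction k)
    case (Suc k)
    then have "step k (y k) \<in> W"
      using step W.closed_subspace_subset[OF F] unfolding ccv_step_def by blast
    then show ?case
      using Suc.IH unfolding y_Suc by (intro subspace_add[OF W.subspace] subspace_scale[OF W.subspace])
  qed (simp add: y_def y0)
  have "dt \<tau> y (Suc k) = step k (y k)" for k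
    using tau_pos by (simp add: dt_def vscale_eq_scaleR vdiff_eq_minus y_Suc)
  moreover have "y 0 = y0" by (simp add: y_def)
  ultimately have "ccv_flow \<omega> ip F f \<epsilon> \<tau> y0 y"
    using step yW by (simp add: flow_iff_steps)
  then show ?thesis by blast
qed

lemma flow_unique:
  assumes F: "\<And>k. W.closed_subspace (F k)" and y0: "y0 \<in> W"
    and y1: "ccv_flow \<omega> ip F f \<epsilon> \<tau> y0 y1" and y2: "ccv_flow \<omega> ip F f \<epsilon> \<tau> y0 y2"
  shows "y1 = y2"
proof -
  have "y1 k = y2 k" for k
  proof (induction k)
    case 0
    then show ?case using y1 y2 by (simp add: flow_iff_steps)
  next
    case (Suc k)
    have "ccv_step \<omega> ip f \<epsilon> \<tau> (F k) (y1 k) (dt \<tau> y1 (Suc k))"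
      using y1 by (simp add: flow_iff_steps)
    moreover have "ccv_step \<omega> ip f \<epsilon> \<tau> (F k) (y1 k) (dt \<tau> y2 (Suc k))"
      using y2 Suc.IH by (simp add: flow_iff_steps)
    ultimately have "dt \<tau> y1 (Suc k) = dt \<tau> y2 (Suc k)"
      using step_exists_unique[OF F flow_in_W[OF F y0 y1]] by blast
    then show ?case
      using Suc.IH dt_Suc[of \<tau> y1 k] dt_Suc[of \<tau> y2 k] tau_pos by simp
  qed
  then show ?thesis by (simp add: fun_eq_iff)
qed

lemma flow_energy_decay:
  assumes F: "\<And>k. W.closed_subspace (F k)" and y0: "y0 \<in> W" and flow: "ccv_flow \<omega> ip F f \<epsilon> \<tau> y0 y"
  shows "energyI \<omega> ip f (y (Suc k)) + penalty \<omega> \<epsilon> (comp3 (y (Suc k)))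
      + \<tau> * (normstar ip (dt \<tau> y (Suc k)))\<^sup>2
    \<le> energyI \<omega> ip f (y k) + penalty \<omega> \<epsilon> (comp3 (y k))"
proof -
  have "ccv_step \<omega> ip f \<epsilon> \<tau> (F k) (y k) (dt \<tau> y (Suc k))"
    using flow by (simp add: flow_iff_steps)
  moreover have "y (Suc k) = y k + \<tau> *\<^sub>R dt \<tau> y (Suc k)"
    using tau_pos by (simp add: dt_Suc)
  ultimately show ?thesis
    using step_energy_decay[OF flow_in_W[OF F y0 flow] W.closed_subspace_subset[OF F]] by (simp only:)
qed

end

theorem proposition6p1:
  fixes \<omega> :: "(real^2) set" and W :: "vfield set" and ip :: "vfield \<Rightarrow> vfield \<Rightarrow> real"
    and F :: "nat \<Rightarrow> vfield set" and f y0 :: vfield and \<epsilon> \<tau> :: real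
  assumes "open \<omega>" and "connected \<omega>" and "\<omega> \<noteq> {}" and "bounded \<omega>"
    and "hilbert_on W ip" and "cont_embedded_L2 \<omega> W ip"
    and "\<And>k. closed_subspace_of (F k) W ip"
    and "L2field \<omega> f"
    and "\<epsilon> > 0" and "\<tau> > 0" and "y0 \<in> W"
  shows "(\<exists>!y. ccv_flow \<omega> ip F f \<epsilon> \<tau> y0 y) \<and>
         (\<forall>y. ccv_flow \<omega> ip F f \<epsilon> \<tau> y0 y \<longrightarrow>
            (\<forall>k\<ge>1. energyI \<omega> ip f (y k) + penalty \<omega> \<epsilon> (comp3 (y k))
                     + \<tau> * (normstar ip (dt \<tau> y k))\<^sup>2
                   \<le> energyI \<omega> ip f (y (k - 1)) + penalty \<omega> \<epsilon> (comp3 (y (k - 1)))))"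
proof -
  interpret ccv_setting \<omega> W ip f \<epsilon> \<tau>
    using assms(5,6,8-10) by unfold_locales
  have F: "W.closed_subspace (F k)" for k
    using assms(7) W.hilbert_space_on_axioms by (rule closed_subspace_of_imp_closed_subspace)
  show ?thesis
  proof (intro conjI allI impI)
    show "\<exists>!y. ccv_flow \<omega> ip F f \<epsilon> \<tau> y0 y"
      using flow_exists[OF F assms(11)] flow_unique[OF F assms(11)] by (rule ex_ex1I)
  next
    fix y and k :: nat
    assume flow: "ccv_flow \<omega> ip F f \<epsilon> \<tau> y0 y" and "1 \<le> k"
    then have "Suc (k - 1) = k" by simp
    then show "energyI \<omega> ip f (y k) + penalty \<omega> \<epsilon> (comp3 (y k)) + \<tau> * (normstar ip (dt \<tau> y k))\<^sup>2
        \<le> energyI \<omega> ip f (y (k - 1)) + penalty \<omega> \<epsilon> (comp3 (y (k - 1)))"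
      using flow_energy_decay[OF F assms(11) flow, of "k - 1"] by (simp only:)
  qed
qed

end
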